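(* (Optimality condition) Let $\mathcal{X}$ be a nonempty convex subset of $\mathbb{R}^n$ and $\mathbf{F}:\mathcal{X}\to I(\mathbb{R})$ a convex interval-valued function. If for some $\bar{x}\in\mathcal{X}$ there exists $\widehat{\mathbf{G}}\in\partial\mathbf{F}(\bar{x})$ such that $(x-\bar{x})^T\odot\widehat{\mathbf{G}}\not\prec\mathbf{0}$ for all $x\in\mathcal{X}$, then $\bar{x}$ is an efficient solution of the problem $\min_{x\in\mathcal{X}}\mathbf{F}(x)$.
   Context: $I(\mathbb{R})$: nonempty compact intervals $\mathbf{A}=[\underline{a},\overline{a}]$; $\mathbf{0}=[0,0]$; $\mathbf{A}\oplus\mathbf{B}=[\underline{a}+\underline{b},\overline{a}+\overline{b}]$; $\lambda\odot\mathbf{A}=[\min\{\lambda\underline{a},\lambda\overline{a}\},\max\{\lambda\underline{a},\lambda\overline{a}\}]$; $\mathbf{A}\ominus_{gH}\mathbf{B}=[\min\{\underline{a}-\underline{b},\overline{a}-\overline{b}\},\max\{\underline{a}-\underline{b},\overline{a}-\overline{b}\}]$; $\mathbf{A}\preceq\mathbf{B}$ iff $\underline{a}\le\underline{b}$ and $\overline{a}\le\overline{b}$; $\mathbf{A}\prec\mathbf{B}$ iff either ($\underline{a}\le\underline{b}$ and $\overline{a}<\overline{b}$) or ($\underline{a}<\underline{b}$ and $\overline{a}\le\overline{b}$); $d^T\odot\widehat{\mathbf{G}}=\bigoplus_i d_i\odot\mathbf{G}_i$. Convex IVF: $\mathbf{F}(\lambda x_1+(1-\lambda)x_2)\preceq\lambda\odot\mathbf{F}(x_1)\oplus(1-\lambda)\odot\mathbf{F}(x_2)$.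 $gH$-subgradient at $\bar{x}$: $\widehat{\mathbf{G}}\in I(\mathbb{R})^n$ with $(x-\bar{x})^T\odot\widehat{\mathbf{G}}\preceq\mathbf{F}(x)\ominus_{gH}\mathbf{F}(\bar{x})$ for all $x\in\mathcal{X}$; $\partial\mathbf{F}(\bar{x})$ is their set. A point $\bar{x}\in\mathcal{X}$ is an efficient solution of $\min_{x\in\mathcal{X}}\mathbf{F}(x)$ if $\mathbf{F}(x)\not\prec\mathbf{F}(\bar{x})$ for all $x\in\mathcal{X}$, $x\ne\bar{x}$. *)

theory Defs
  imports "HOL-Analysis.Analysis"
begin

typedef ivl = "{p :: real \<times> real. fst p \<le> snd p}"
  by (rule exI[of _ "(0,0)"]) simp

setup_lifting type_definition_ivl

lift_definition lo :: "ivl \<Rightarrow> real" is fst .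
lift_definition hi :: "ivl \<Rightarrow> real" is snd .

lift_definition ivl_zero :: ivl is "(0, 0)" by simp

lift_definition ivl_add :: "ivl \<Rightarrow> ivl \<Rightarrow> ivl" (infixl "\<oplus>\<^sub>I" 65)
  is "\<lambda>A B. (fst A + fst B, snd A + snd B)" by auto

lift_definition ivl_scale :: "real \<Rightarrow> ivl \<Rightarrow> ivl" (infixr "\<odot>\<^sub>I" 75)
  is "\<lambda>l A. (min (l * fst A) (l * snd A), max (l * fst A) (l * snd A))" by auto

lift_definition ivl_gH_minus :: "ivl \<Rightarrow> ivl \<Rightarrow> ivl" (infixl "\<ominus>\<^sub>g\<^sub>H" 65)
  is "\<lambda>A B. (min (fst A - fst B) (snd A - snd B), max (fst A - fst B) (snd A - snd B))"
  by auto

definition ivl_le :: "ivl \<Rightarrow> ivl \<Rightarrow> bool" (infix "\<preceq>\<^sub>I" 50) where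
  "A \<preceq>\<^sub>I B \<longleftrightarrow> lo A \<le> lo B \<and> hi A \<le> hi B"

definition ivl_less :: "ivl \<Rightarrow> ivl \<Rightarrow> bool" (infix "\<prec>\<^sub>I" 50) where
  "A \<prec>\<^sub>I B \<longleftrightarrow> (lo A \<le> lo B \<and> hi A < hi B) \<or> (lo A < lo B \<and> hi A \<le> hi B)"

text \<open>d^T \<odot> G = \<Oplus>_i d_i \<odot> G_i; since \<oplus> adds endpoints, the iterated
  interval sum is the interval of endpoint sums.\<close>
lift_definition ivl_dot :: "real ^ 'n \<Rightarrow> ivl ^ 'n \<Rightarrow> ivl"
  is "\<lambda>d G. (\<Sum>i\<in>UNIV. lo ((d $ i) \<odot>\<^sub>I (G $ i)), \<Sum>i\<in>UNIV. hi ((d $ i) \<odot>\<^sub>I (G $ i)))"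
  by (auto intro!: sum_mono simp: lo.rep_eq hi.rep_eq ivl_scale.rep_eq)

definition convex_ivf :: "(real ^ 'n) set \<Rightarrow> (real ^ 'n \<Rightarrow> ivl) \<Rightarrow> bool" where
  "convex_ivf X F \<longleftrightarrow> (\<forall>x1\<in>X. \<forall>x2\<in>X. \<forall>l::real. 0 \<le> l \<and> l \<le> 1 \<longrightarrow>
     F (l *\<^sub>R x1 + (1 - l) *\<^sub>R x2) \<preceq>\<^sub>I (l \<odot>\<^sub>I F x1) \<oplus>\<^sub>I ((1 - l) \<odot>\<^sub>I F x2))"

definition gH_subdiff :: "(real ^ 'n) set \<Rightarrow> (real ^ 'n \<Rightarrow> ivl) \<Rightarrow> real ^ 'n \<Rightarrow> (ivl ^ 'n) set" where
  "gH_subdiff X F xb = {G. \<forall>x\<in>X. ivl_dot (x - xb) G \<preceq>\<^sub>I (F x \<ominus>\<^sub>g\<^sub>H F xb)}"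

definition efficient_solution :: "(real ^ 'n) set \<Rightarrow> (real ^ 'n \<Rightarrow> ivl) \<Rightarrow> real ^ 'n \<Rightarrow> bool" where
  "efficient_solution X F xb \<longleftrightarrow> xb \<in> X \<and> (\<forall>x\<in>X. x \<noteq> xb \<longrightarrow> \<not> (F x \<prec>\<^sub>I F xb))"

end

theory Submission
  imports Defs
begin

lemma ivl_le_less_trans: "A \<preceq>\<^sub>I B \<Longrightarrow> B \<prec>\<^sub>I C \<Longrightarrow> A \<prec>\<^sub>I C"
  by (auto simp: ivl_le_def ivl_less_def)

lemma ivl_gH_minus_less_zero_iff: "A \<ominus>\<^sub>g\<^sub>H B \<prec>\<^sub>I ivl_zero \<longleftrightarrow> A \<prec>\<^sub>I B"
  by (auto simp: ivl_less_def lo.rep_eq hi.rep_eq ivl_gH_minus.rep_eq ivl_zero.rep_eq)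

lemma gH_subdiffD:
  "G \<in> gH_subdiff X F xb \<Longrightarrow> x \<in> X \<Longrightarrow> ivl_dot (x - xb) G \<preceq>\<^sub>I F x \<ominus>\<^sub>g\<^sub>H F xb"
  by (simp add: gH_subdiff_def)

theorem mainTheorem18:
  fixes X :: "(real ^ 'n) set" and F :: "real ^ 'n \<Rightarrow> ivl" and xb :: "real ^ 'n"
    and G :: "ivl ^ 'n"
  assumes "X \<noteq> {}" and "convex X" and "convex_ivf X F"
    and "xb \<in> X" and "G \<in> gH_subdiff X F xb"
    and "\<forall>x\<in>X. \<not> (ivl_dot (x - xb) G \<prec>\<^sub>I ivl_zero)"
  shows "efficient_solution X F xb"
  unfolding efficient_solution_def
proof (intro conjI ballI impI notI)
  show "xb \<in> X" by fact
  fix x assume "x \<in> X" and "F x \<prec>\<^sub>I F xb"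
  then have "F x \<ominus>\<^sub>g\<^sub>H F xb \<prec>\<^sub>I ivl_zero"
    by (simp add: ivl_gH_minus_less_zero_iff)
  with gH_subdiffD[OF \<open>G \<in> gH_subdiff X F xb\<close> \<open>x \<in> X\<close>]
  have "ivl_dot (x - xb) G \<prec>\<^sub>I ivl_zero"
    by (rule ivl_le_less_trans)
  with assms(6) \<open>x \<in> X\<close> show False by blast
qed

end
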